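(* Let $p\equiv 1\pmod 4$ be a prime and let $u$ be an integer with $u^2\equiv -1\pmod p$ and $1\le u<p/2$. Define points $\mathbf{x}_i=(x_i,y_i)\in\mathbb{Z}^2$ (the extended Brillhart sequence) by $\mathbf{x}_0=(p,0)$, $\mathbf{x}_1=(u,1)$, and, for $i\ge 1$ with $x_i>0$, write $x_{i-1}=q_ix_i+r_i$ with $0\le r_i<x_i$ (so $q_i=\lfloor x_{i-1}/x_i\rfloor$) and set $\mathbf{x}_{i+1}=\mathbf{x}_{i-1}-q_i\mathbf{x}_i=(r_i,\,y_{i-1}-q_iy_i)$. Define also the modified Lagrange (ML) sequence $\mathbf{x}'_i$ by $\mathbf{x}'_0=(p,0)$, $\mathbf{x}'_1=(u,1)$, and, for $i\ge1$, as long as $\|\mathbf{x}'_i\|\le\|\mathbf{x}'_{i-1}\|$, \[ q'_i=\left\lfloor\frac{\mathbf{x}'_i\cdot\mathbf{x}'_{i-1}}{\|\mathbf{x}'_i\|^2}\right\rfloor,\qquad \mathbf{x}'_{i+1}=\mathbf{x}'_{i-1}-q'_i\mathbf{x}'_i. \] Then for every $i\ge 1$ such that $x_i>|y_i|$ (and for which the ML step is defined), $q_i=q'_i$; equivalently, \[ \left\lfloor\frac{x_{i-1}}{x_i}\right\rfloor=\left\lfloor\frac{x_{i-1}x_i+y_{i-1}y_i}{x_i^2+y_i^2}\right\rfloor, \] so that the Brillhart sequence and the ML sequence coincide until the ML algorithm terminates.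
   Context: Here $\cdot$ denotes the standard dot product and $\|\cdot\|$ the Euclidean norm on $\mathbb{R}^2$. The sequence $(x_i)$ is exactly the sequence of remainders of the Euclidean algorithm applied to $p$ and $u$. *)

theory Defs
  imports Complex_Main "HOL-Number_Theory.Cong"
begin

type_synonym pt = "int \<times> int"

definition pt_sub :: "pt \<Rightarrow> pt \<Rightarrow> pt" where
  "pt_sub a b = (fst a - fst b, snd a - snd b)"

definition pt_scale :: "int \<Rightarrow> pt \<Rightarrow> pt" where
  "pt_scale q a = (q * fst a, q * snd a)"

definition pt_dot :: "pt \<Rightarrow> pt \<Rightarrow> int" where
  "pt_dot a b = fst a * fst b + snd a * snd b"

definition pt_sqnorm :: "pt \<Rightarrow> int" where
  "pt_sqnorm a = pt_dot a a"

(* Extended Brillhart sequence: brill_pair p u n = (x_n, x_{n+1}).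
   Once the step is undefined (x_n \<le> 0) the sequence is frozen; the
   theorem only looks at indices where the step is defined. *)
fun brill_pair :: "int \<Rightarrow> int \<Rightarrow> nat \<Rightarrow> pt \<times> pt" where
  "brill_pair p u 0 = ((p, 0), (u, 1))"
| "brill_pair p u (Suc n) =
     (let (a, b) = brill_pair p u n in
      if fst b > 0 then (b, pt_sub a (pt_scale (fst a div fst b) b)) else (b, b))"

definition brill :: "int \<Rightarrow> int \<Rightarrow> nat \<Rightarrow> pt" where
  "brill p u n = fst (brill_pair p u n)"

definition brill_q :: "int \<Rightarrow> int \<Rightarrow> nat \<Rightarrow> int" where
  "brill_q p u i = \<lfloor>real_of_int (fst (brill p u (i - 1))) / real_of_int (fst (brill p u i))\<rfloor>"

(* Modified Lagrange sequence: ml_pair p u n = (x'_n, x'_{n+1}); frozen once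
   the condition ||x'_i|| \<le> ||x'_{i-1}|| fails. *)
definition ml_quot :: "pt \<Rightarrow> pt \<Rightarrow> int" where
  "ml_quot a b = \<lfloor>real_of_int (pt_dot b a) / real_of_int (pt_sqnorm b)\<rfloor>"

fun ml_pair :: "int \<Rightarrow> int \<Rightarrow> nat \<Rightarrow> pt \<times> pt" where
  "ml_pair p u 0 = ((p, 0), (u, 1))"
| "ml_pair p u (Suc n) =
     (let (a, b) = ml_pair p u n in
      if pt_sqnorm b \<le> pt_sqnorm a then (b, pt_sub a (pt_scale (ml_quot a b) b)) else (b, b))"

definition ml :: "int \<Rightarrow> int \<Rightarrow> nat \<Rightarrow> pt" where
  "ml p u n = fst (ml_pair p u n)"

definition ml_q :: "int \<Rightarrow> int \<Rightarrow> nat \<Rightarrow> int" where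
  "ml_q p u i = ml_quot (ml p u (i - 1)) (ml p u i)"

definition ml_defined_upto :: "int \<Rightarrow> int \<Rightarrow> nat \<Rightarrow> bool" where
  "ml_defined_upto p u i \<longleftrightarrow>
     (\<forall>j\<in>{1..i}. pt_sqnorm (ml p u j) \<le> pt_sqnorm (ml p u (j - 1)))"

end

theory Submission
  imports Defs
begin

(* Consecutive Brillhart points x_{i-1} = (a, b), x_i = (c, d) form a basis of determinant p of the
   lattice {(x, y). x = u y (mod p)}, with y-coordinates of opposite signs and growing in absolute
   value.  Writing x_{i-1} = q x_i + x_{i+1}, the ML numerator is q |x_i|^2 + s with s = x_i . x_{i+1}.
   Since u^2 = -1 (mod p), p divides the dot product of any two lattice points, so p divides s;
   the sign pattern and the determinant give -p < s < |x_i|^2 as soon as |d| < c.  Hence s is the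
   remainder and both floors equal q. *)

lemma dvd_greater_neg_imp_nonneg:
  fixes p s :: int
  assumes "p dvd s" and "- p < s"
  shows "0 \<le> s"
proof -
  obtain k where s: "s = p * k" using assms(1) by blast
  show ?thesis
  proof (cases "p > 0")
    case True
    then have "- 1 < k" using assms(2) s by (metis mult.right_neutral mult_less_cancel_left_pos mult_minus_right)
    then show ?thesis using True s by simp
  next
    case False
    then show ?thesis using assms(2) by linarith
  qed
qed

lemma abs_diff_opposite_signs:
  fixes b d q :: int
  assumes "b * d \<le> 0" and "0 \<le> q"
  shows "\<bar>b - q * d\<bar> = \<bar>b\<bar> + q * \<bar>d\<bar>"
proof -
  consider "0 \<le> b" "d \<le> 0" | "b \<le> 0" "0 \<le> d" using assms(1) by (auto simp: mult_le_0_iff)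
  then show ?thesis
  proof cases
    case 1
    then have "q * d \<le> 0" using assms(2) by (simp add: mult_nonneg_nonpos)
    then show ?thesis using 1 by simp
  next
    case 2
    then have "0 \<le> q * d" using assms(2) by simp
    then show ?thesis using 2 by simp
  qed
qed

lemma mult_abs_le_abs_det:
  fixes c d r e :: int
  assumes "0 \<le> c" and "0 \<le> r" and "d * e \<le> 0"
  shows "c * \<bar>e\<bar> \<le> \<bar>c * e - d * r\<bar>"
proof -
  consider "0 \<le> d" "e \<le> 0" | "d \<le> 0" "0 \<le> e" using assms(3) by (auto simp: mult_le_0_iff)
  then show ?thesis
  proof cases
    case 1
    then have "0 \<le> d * r" "c * e \<le> 0" using assms(1,2) by (simp_all add: mult_nonneg_nonpos)
    then show ?thesis using 1 assms(1) by (simp add: abs_mult)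
  next
    case 2
    then have "d * r \<le> 0" "0 \<le> c * e" using assms(1,2) by (simp_all add: mult_nonpos_nonneg)
    then show ?thesis using 2 assms(1) by (simp add: abs_mult)
  qed
qed

lemma lattice_dot_dvd:
  fixes p u x y x' y' :: int
  assumes "p dvd x - u * y" and "p dvd x' - u * y'" and "p dvd u\<^sup>2 + 1"
  shows "p dvd x * x' + y * y'"
proof -
  have "x * x' + y * y' = (x - u * y) * x' + u * y * (x' - u * y') + y * y' * (u\<^sup>2 + 1)"
    by (simp add: algebra_simps power2_eq_square)
  then show ?thesis using assms by simp
qed

definition brillhart_invariant :: "int \<Rightarrow> int \<Rightarrow> int \<Rightarrow> int \<Rightarrow> int \<Rightarrow> int \<Rightarrow> bool" where
  "brillhart_invariant p u a b c d \<longleftrightarrow>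
     0 \<le> c \<and> c < a \<and> p dvd a - u * b \<and> p dvd c - u * d \<and> \<bar>a * d - b * c\<bar> = p
     \<and> b * d \<le> 0 \<and> \<bar>b\<bar> \<le> \<bar>d\<bar>"

lemma brillhart_invariant_step:
  assumes inv: "brillhart_invariant p u a b c d" and c_pos: "0 < c"
  shows "brillhart_invariant p u c d (a - (a div c) * c) (b - (a div c) * d)"
proof -
  define q where "q = a div c"
  have "c \<le> a" using inv unfolding brillhart_invariant_def by simp
  then have "1 \<le> q" using pos_imp_zdiv_pos_iff[OF c_pos, of a] unfolding q_def by linarith
  have rem: "a - q * c = a mod c" unfolding q_def by (simp add: minus_div_mult_eq_mod)
  have "(a - q * c) - u * (b - q * d) = (a - u * b) - q * (c - u * d)"
    by (simp add: algebra_simps)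
  then have lattice: "p dvd (a - q * c) - u * (b - q * d)"
    using inv unfolding brillhart_invariant_def by (metis dvd_diff dvd_mult)
  have "c * (b - q * d) - d * (a - q * c) = - (a * d - b * c)"
    by (simp add: algebra_simps)
  then have det: "\<bar>c * (b - q * d) - d * (a - q * c)\<bar> = p"
    using inv unfolding brillhart_invariant_def by (metis abs_minus_cancel)
  have "d * (b - q * d) = b * d - q * d\<^sup>2" by (simp add: algebra_simps power2_eq_square)
  moreover have "0 \<le> q * d\<^sup>2" using \<open>1 \<le> q\<close> by simp
  ultimately have sign: "d * (b - q * d) \<le> 0"
    using inv unfolding brillhart_invariant_def by linarith
  have "\<bar>d\<bar> \<le> q * \<bar>d\<bar>" using \<open>1 \<le> q\<close> by (simp add: mult_le_cancel_right1)
  then have growth: "\<bar>d\<bar> \<le> \<bar>b - q * d\<bar>"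
    using abs_diff_opposite_signs[of b d q] inv \<open>1 \<le> q\<close> unfolding brillhart_invariant_def by simp
  show ?thesis
    using inv c_pos rem lattice det sign growth unfolding brillhart_invariant_def q_def[symmetric]
    by simp
qed

lemma brillhart_invariant_dot_quotient:
  assumes inv: "brillhart_invariant p u a b c d" and p_dvd: "p dvd u\<^sup>2 + 1" and dc: "\<bar>d\<bar> < c"
  shows "(a * c + b * d) div (c\<^sup>2 + d\<^sup>2) = a div c"
proof -
  define q r e where "q = a div c" and "r = a - q * c" and "e = b - q * d"
  have "brillhart_invariant p u c d r e"
    using brillhart_invariant_step[OF inv] dc unfolding q_def r_def e_def by simp
  then have r: "0 \<le> r" "r < c" and de: "d * e \<le> 0" and det: "\<bar>c * e - d * r\<bar> = p"
    and lattice: "p dvd c - u * d" "p dvd r - u * e"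
    unfolding brillhart_invariant_def by (auto simp: abs_minus_commute)
  define s where "s = c * r + d * e"
  have numerator: "a * c + b * d = q * (c\<^sup>2 + d\<^sup>2) + s"
    unfolding s_def r_def e_def by (simp add: algebra_simps power2_eq_square)
  have "0 \<le> s"
  proof (cases "e = 0")
    case True
    then show ?thesis using r dc unfolding s_def by simp
  next
    case False
    have "\<bar>d\<bar> * \<bar>e\<bar> < c * \<bar>e\<bar>" using False dc by simp
    also have "\<dots> \<le> p" using mult_abs_le_abs_det[of c r d e] r de det dc by simp
    finally have "\<bar>d\<bar> * \<bar>e\<bar> < p" .
    moreover have "d * e = - (\<bar>d\<bar> * \<bar>e\<bar>)" using de by (simp add: abs_mult[symmetric])
    moreover have "0 \<le> c * r" using r by simp
    ultimately have "- p < s" unfolding s_def by linarith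
    moreover have "p dvd s" using lattice_dot_dvd[OF lattice p_dvd] unfolding s_def .
    ultimately show ?thesis by (rule dvd_greater_neg_imp_nonneg[rotated])
  qed
  moreover have "s < c\<^sup>2 + d\<^sup>2"
  proof -
    have "c * r < c * c" using r by simp
    then show ?thesis using de zero_le_square[of d] unfolding s_def power2_eq_square by linarith
  qed
  ultimately show ?thesis unfolding numerator q_def by (simp add: div_add1_eq)
qed

lemma fst_brill_pair_Suc: "fst (brill_pair p u (Suc n)) = snd (brill_pair p u n)"
  by (cases "brill_pair p u n") (auto simp: Let_def)

lemma fst_ml_pair_Suc: "fst (ml_pair p u (Suc n)) = snd (ml_pair p u n)"
  by (cases "ml_pair p u n") (auto simp: Let_def)

lemma brill_pair_Suc:
  assumes "brill_pair p u n = ((a, b), (c, d))" and "0 < c"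
  shows "brill_pair p u (Suc n) = ((c, d), (a - (a div c) * c, b - (a div c) * d))"
  using assms by (simp add: pt_sub_def pt_scale_def)

lemma ml_quot_Pair: "ml_quot (a, b) (c, d) = (a * c + b * d) div (c\<^sup>2 + d\<^sup>2)"
proof -
  have "ml_quot (a, b) (c, d) = (c * a + d * b) div (c * c + d * d)"
    unfolding ml_quot_def pt_dot_def pt_sqnorm_def
    by (simp only: fst_conv snd_conv floor_divide_of_int_eq)
  then show ?thesis by (simp add: algebra_simps power2_eq_square)
qed

context
  fixes p u :: int
  assumes u_nonneg: "0 \<le> u" and u_less: "u < p"
begin

lemma brillhart_invariant_brill_pair:
  assumes "brill_pair p u n = ((a, b), (c, d))" and "0 < c"
  shows "brillhart_invariant p u a b c d"
  using assms
proof (induction n arbitrary: a b c d)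
  case 0
  then show ?case using u_nonneg u_less by (auto simp: brillhart_invariant_def)
next
  case (Suc n)
  obtain a' b' c' d' where pair: "brill_pair p u n = ((a', b'), (c', d'))"
    by (metis prod.exhaust)
  have "0 < c'"
  proof (rule ccontr)
    assume "\<not> 0 < c'"
    then have "brill_pair p u (Suc n) = ((c', d'), (c', d'))" using pair by simp
    then have "c = c'" using Suc.prems(1) by simp
    then show False using Suc.prems(2) \<open>\<not> 0 < c'\<close> by simp
  qed
  then show ?case
    using Suc.prems Suc.IH[OF pair] brill_pair_Suc[OF pair] brillhart_invariant_step by auto
qed

lemma brill_Suc_mono:
  assumes "0 < fst (brill p u (Suc n))"
  shows "fst (brill p u (Suc n)) < fst (brill p u n)
    \<and> \<bar>snd (brill p u n)\<bar> \<le> \<bar>snd (brill p u (Suc n))\<bar>"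
proof -
  obtain a b c d where pair: "brill_pair p u n = ((a, b), (c, d))" by (metis prod.exhaust)
  have "brill p u (Suc n) = (c, d)"
    unfolding brill_def fst_brill_pair_Suc pair by simp
  moreover have "brill p u n = (a, b)" unfolding brill_def pair by simp
  ultimately show ?thesis
    using assms brillhart_invariant_brill_pair[OF pair] by (simp add: brillhart_invariant_def)
qed

lemma brill_mono:
  assumes "n \<le> m" and "0 < fst (brill p u m)"
  shows "fst (brill p u m) \<le> fst (brill p u n) \<and> \<bar>snd (brill p u n)\<bar> \<le> \<bar>snd (brill p u m)\<bar>"
  using assms
proof (induction m rule: dec_induct)
  case base
  then show ?case by simp
next
  case (step m)
  then show ?case using brill_Suc_mono[of m] by fastforce
qed

lemma ml_pair_eq_brill_pair:
  assumes p_dvd: "p dvd u\<^sup>2 + 1" and reduced: "\<bar>snd (brill p u i)\<bar> < fst (brill p u i)"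
    and ml_defined: "ml_defined_upto p u i" and "n \<le> i"
  shows "ml_pair p u n = brill_pair p u n"
  using \<open>n \<le> i\<close>
proof (induction n)
  case 0
  then show ?case by simp
next
  case (Suc n)
  then have IH: "ml_pair p u n = brill_pair p u n" by simp
  obtain a b c d where pair: "brill_pair p u n = ((a, b), (c, d))" by (metis prod.exhaust)
  have brill_Suc: "brill p u (Suc n) = (c, d)" unfolding brill_def fst_brill_pair_Suc pair by simp
  have "fst (brill p u i) \<le> c \<and> \<bar>d\<bar> \<le> \<bar>snd (brill p u i)\<bar>"
    using brill_mono[OF \<open>Suc n \<le> i\<close>] reduced brill_Suc by simp
  then have "\<bar>d\<bar> < c" using reduced by linarith
  then have quot: "ml_quot (a, b) (c, d) = a div c"
    using brillhart_invariant_dot_quotient[OF brillhart_invariant_brill_pair[OF pair] p_dvd]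
    by (simp add: ml_quot_Pair)
  have "ml p u n = (a, b)" "ml p u (Suc n) = (c, d)"
    unfolding ml_def fst_ml_pair_Suc IH pair by simp_all
  then have "pt_sqnorm (c, d) \<le> pt_sqnorm (a, b)"
    using ml_defined \<open>Suc n \<le> i\<close> unfolding ml_defined_upto_def by force
  moreover have "0 < c" using \<open>\<bar>d\<bar> < c\<close> by linarith
  ultimately show ?case
    using IH pair quot brill_pair_Suc[OF pair] \<open>\<bar>d\<bar> < c\<close>
    by (simp add: pt_sub_def pt_scale_def)
qed

end

theorem mainTheorem1:
  fixes p u :: int and i :: nat
  assumes "prime p" and "[p = 1] (mod 4)"
    and "[u ^ 2 = - 1] (mod p)" and "1 \<le> u" and "real_of_int u < real_of_int p / 2"
    and "1 \<le> i"
    and "fst (brill p u i) > \<bar>snd (brill p u i)\<bar>"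
    and "ml_defined_upto p u i"
  shows "brill_q p u i = ml_q p u i
         \<and> brill_q p u i =
             \<lfloor>real_of_int (fst (brill p u (i - 1)) * fst (brill p u i)
                             + snd (brill p u (i - 1)) * snd (brill p u i))
              / real_of_int (fst (brill p u i) ^ 2 + snd (brill p u i) ^ 2)\<rfloor>
         \<and> brill p u i = ml p u i \<and> brill p u (i + 1) = ml p u (i + 1)"
proof -
  have u: "0 \<le> u" "u < p" using assms(4,5) by linarith+
  have p_dvd: "p dvd u\<^sup>2 + 1" using assms(3) by (simp add: cong_iff_dvd_diff)
  obtain m where i: "i = Suc m" using assms(6) by (cases i) auto
  obtain a b c d where pair: "brill_pair p u m = ((a, b), (c, d))" by (metis prod.exhaust)
  have ml_eq: "ml_pair p u n = brill_pair p u n" if "n \<le> i" for n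
    using ml_pair_eq_brill_pair[OF u p_dvd assms(7,8) that] .
  have brill: "brill p u (i - 1) = (a, b)" "brill p u i = (c, d)"
    unfolding brill_def i fst_brill_pair_Suc using pair by simp_all
  moreover have "ml p u (i - 1) = (a, b)" "ml p u i = (c, d)"
    using brill ml_eq[of m] ml_eq[of i] unfolding brill_def ml_def i by simp_all
  moreover have "brill p u (i + 1) = ml p u (i + 1)"
    unfolding brill_def ml_def Suc_eq_plus1[symmetric] fst_brill_pair_Suc fst_ml_pair_Suc
    using ml_eq[of i] by simp
  moreover have "(a * c + b * d) div (c\<^sup>2 + d\<^sup>2) = a div c"
    using brillhart_invariant_dot_quotient[OF brillhart_invariant_brill_pair[OF u pair] p_dvd]
      assms(7) brill by simp
  ultimately show ?thesis
    unfolding brill_q_def ml_q_def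
    by (simp add: ml_quot_Pair floor_divide_of_int_eq del: of_int_add of_int_mult of_int_power)
qed

end
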